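(* Let $\mathcal{A}$ be a pca and let $b\in\mathcal{A}$ satisfy $ba\simeq aa$ for all $a\in\mathcal{A}$. Then $b$ has a total extension in $\mathcal{A}$ if and only if every element of $\mathcal{A}$ has a total extension in $\mathcal{A}$.
   Context: A pca is a set $\mathcal{A}$ with partial binary application $ab$ (left associative, strict) containing $k,s$ with $kab=a$, $sab\downarrow$, $sabc\simeq ac(bc)$; $\simeq$ means both sides undefined or both defined and equal. An element $f$ is total if $fa$ is defined for all $a$; $f$ is a total extension of $b$ if $f$ is total and $ba\downarrow\Rightarrow fa=ba$ for all $a$. *)

theory Defs
  imports Main
begin

text \<open>A partial applicative structure on carrier type 'a: app a b = None means
  ab is undefined, app a b = Some c means ab is defined and equals c.
  Application of (possibly undefined) terms is strict.\<close>

definition papp :: "('a \<Rightarrow> 'a \<Rightarrow> 'a option) \<Rightarrow> 'a option \<Rightarrow> 'a option \<Rightarrow> 'a option" where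
  "papp app x y = Option.bind x (\<lambda>a. Option.bind y (\<lambda>b. app a b))"

text \<open>Partial combinatory algebra: there are k, s with kab = a, sab defined,
  sabc \<simeq> ac(bc). Kleene equality \<simeq> is HOL equality on options.\<close>
definition is_pca :: "('a \<Rightarrow> 'a \<Rightarrow> 'a option) \<Rightarrow> bool" where
  "is_pca app \<longleftrightarrow> (\<exists>k s.
     (\<forall>a b. papp app (papp app (Some k) (Some a)) (Some b) = Some a) \<and>
     (\<forall>a b. papp app (papp app (Some s) (Some a)) (Some b) \<noteq> None) \<and>
     (\<forall>a b c. papp app (papp app (papp app (Some s) (Some a)) (Some b)) (Some c)
              = papp app (papp app (Some a) (Some c)) (papp app (Some b) (Some c))))"

definition total_elem :: "('a \<Rightarrow> 'a \<Rightarrow> 'a option) \<Rightarrow> 'a \<Rightarrow> bool" where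
  "total_elem app f \<longleftrightarrow> (\<forall>a. app f a \<noteq> None)"

definition total_extension :: "('a \<Rightarrow> 'a \<Rightarrow> 'a option) \<Rightarrow> 'a \<Rightarrow> 'a \<Rightarrow> bool" where
  "total_extension app f b \<longleftrightarrow> total_elem app f \<and>
     (\<forall>a. app b a \<noteq> None \<longrightarrow> app f a = app b a)"

end

theory Submission
  imports Defs
begin

(* If f totally extends b, compose f with the total map y \<mapsto> d y, where d y = S(Kc)(Ky)
   satisfies (d y) x \<simeq> cy for every x. By the hypothesis on b, b(d y) \<simeq> (d y)(d y) \<simeq> cy,
   so the composite totally extends c. *)

locale pca_combinators =
  fixes app :: "'a \<Rightarrow> 'a \<Rightarrow> 'a option"
    and k s :: 'a and K :: "'a \<Rightarrow> 'a" and Sa :: "'a \<Rightarrow> 'a" and S :: "'a \<Rightarrow> 'a \<Rightarrow> 'a"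
  assumes app_k: "app k a = Some (K a)"
    and app_K: "app (K a) b = Some a"
    and app_s: "app s a = Some (Sa a)"
    and app_Sa: "app (Sa a) b = Some (S a b)"
    and app_S: "app (S a b) c = Option.bind (app a c) (\<lambda>u. Option.bind (app b c) (app u))"
begin

lemma app_compose: "app (S (K f) g) y = Option.bind (app g y) (app f)"
  by (simp add: app_S app_K)

lemma app_delayed: "app (S (K c) (K y)) x = app c y"
  by (cases "app c y") (simp_all add: app_S app_K)

lemma app_delay: "app (S (K (Sa (K c))) k) y = Some (S (K c) (K y))"
  by (simp add: app_S app_K app_k app_Sa)

lemma total_extension_compose:
  assumes "total_extension app f b"
    and g: "\<And>y. app g y = Some (h y)"
    and bh: "\<And>y. app b (h y) = app c y"
  shows "total_extension app (S (K f) g) c"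
  using assms(1) unfolding total_extension_def total_elem_def
  by (metis app_compose g bh bind.bind_lunit)

end

lemma is_pca_combinators:
  assumes "is_pca app"
  obtains k s K Sa S where "pca_combinators app k s K Sa S"
proof -
  obtain k s where k: "\<And>a b. papp app (papp app (Some k) (Some a)) (Some b) = Some a"
    and s_def: "\<And>a b. papp app (papp app (Some s) (Some a)) (Some b) \<noteq> None"
    and s: "\<And>a b c. papp app (papp app (papp app (Some s) (Some a)) (Some b)) (Some c)
              = papp app (papp app (Some a) (Some c)) (papp app (Some b) (Some c))"
    using assms unfolding is_pca_def by blast
  have "\<exists>x. app k a = Some x \<and> (\<forall>b. app x b = Some a)" for a
    using k[of a] by (cases "app k a") (auto simp: papp_def)
  then obtain K where app_k: "\<And>a. app k a = Some (K a)" and app_K: "\<And>a b. app (K a) b = Some a"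
    by metis
  have "\<exists>x. app s a = Some x" for a
    using s_def[of a a] by (cases "app s a") (auto simp: papp_def)
  then obtain Sa where app_s: "\<And>a. app s a = Some (Sa a)" by metis
  have "\<exists>x. app (Sa a) b = Some x" for a b
    using s_def[of a b] app_s by (cases "app (Sa a) b") (auto simp: papp_def)
  then obtain S where app_Sa: "\<And>a b. app (Sa a) b = Some (S a b)" by metis
  have "app (S a b) c = Option.bind (app a c) (\<lambda>u. Option.bind (app b c) (app u))" for a b c
    using s[of a b c] by (simp add: papp_def app_s app_Sa)
  with app_k app_K app_s app_Sa show thesis
    by (intro that) (unfold_locales)
qed

theorem mainTheorem14:
  fixes app :: "'a \<Rightarrow> 'a \<Rightarrow> 'a option" and b :: 'a
  assumes "is_pca app"
    and "\<forall>a. app b a = app a a"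
  shows "(\<exists>f. total_extension app f b) \<longleftrightarrow> (\<forall>c. \<exists>f. total_extension app f c)"
proof
  assume "\<exists>f. total_extension app f b"
  then obtain f where f: "total_extension app f b" ..
  obtain k s K Sa S where "pca_combinators app k s K Sa S"
    using is_pca_combinators[OF assms(1)] .
  then interpret pca_combinators app k s K Sa S .
  show "\<forall>c. \<exists>f. total_extension app f c"
  proof
    fix c
    have "app b (S (K c) (K y)) = app c y" for y
      using assms(2) app_delayed by simp
    then show "\<exists>f. total_extension app f c"
      using total_extension_compose[OF f app_delay] by blast
  qed
qed blast

end
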